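(* Let $A\in\mathrm{SL}(n,\mathbb{C})$ be such that its characteristic polynomial $\chi_A(x)=x^n-c_{n-1}x^{n-1}+c_{n-2}x^{n-2}-\cdots+(-1)^n$ is $c$-reciprocal. Let $R(\chi_A,\chi_A')$ denote the resultant of $\chi_A$ and its derivative $\chi_A'$. Then: (i) $A$ is regular $2m$-loxodromic for some integer $m\ge 0$ if and only if $R(\chi_A,\chi_A')>0$; (ii) $A$ is regular $(2m+1)$-loxodromic for some integer $m\ge 0$ if and only if $R(\chi_A,\chi_A')<0$; (iii) $A$ is not regular (i.e. has a repeated eigenvalue) if and only if $R(\chi_A,\chi_A')=0$.
   Context: A polynomial $f$ with nonzero roots is $c$-reciprocal if for every root $\lambda$, $\overline{\lambda}^{-1}$ is also a root with the same multiplicity. A matrix in $\mathrm{SL}(n,\mathbb{C})$ is regular if its characteristic polynomial has no repeated roots. A matrix $g\in\mathrm{SL}(n,\mathbb{C})$ is $k$-loxodromic ($k\ge 0$) if it has $k$ pairs of eigenvalues $r_je^{i\theta_j}, r_j^{-1}e^{i\theta_j}$ with $r_j>0$, $r_j\neq 1$, $j=1,\dots,k$, and all other eigenvalues have modulus one ($0$-loxodromic means all eigenvalues have modulus one). "Regular $k$-loxodromic" means regular and $k$-loxodromic. *)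

theory Defs
  imports "Jordan_Normal_Form.Char_Poly" "Subresultants.Resultant_Prelim"
begin

definition c_reciprocal :: "complex poly \<Rightarrow> bool" where
  "c_reciprocal f \<longleftrightarrow> f \<noteq> 0 \<and>
     (\<forall>z. poly f z = 0 \<longrightarrow> z \<noteq> 0 \<and> order (inverse (cnj z)) f = order z f)"

definition SL :: "nat \<Rightarrow> complex mat set" where
  "SL n = {A. A \<in> carrier_mat n n \<and> det A = 1}"

definition regular_mat :: "complex mat \<Rightarrow> bool" where
  "regular_mat A \<longleftrightarrow> rsquarefree (char_poly A)"

definition k_loxodromic :: "nat \<Rightarrow> complex mat \<Rightarrow> bool" where
  "k_loxodromic k A \<longleftrightarrow>
     (\<exists>(r :: nat \<Rightarrow> real) (\<theta> :: nat \<Rightarrow> real) (N :: complex multiset).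
        (\<forall>j<k. r j > 0 \<and> r j \<noteq> 1) \<and> (\<forall>z\<in>#N. cmod z = 1) \<and>
        proots (char_poly A) =
          (\<Sum>j<k. {# complex_of_real (r j) * cis (\<theta> j),
                     complex_of_real (inverse (r j)) * cis (\<theta> j) #}) + N)"

end

(*
  For a monic polynomial f with simple roots S, the resultant of f and f' is the product of
  a - b over all ordered pairs of distinct roots.  As the product of the roots is det A = 1, it
  equals the product of the factors 1 - b / a.  Since S is closed under z |-> 1 / cnj z, the map
  (a, b) |-> (1 / cnj b, 1 / cnj a) is an involution of the pairs which conjugates each factor, so
  the pairs it moves contribute a positive real number.  Its fixed pairs are (a, 1 / cnj a) with
  |a| <> 1, contributing 1 - 1 / |a|^2, which is negative exactly when |a| < 1.  Hence the
  resultant is real with sign (-1)^l, where l is the number of roots in the open unit disc; and l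
  is the number of loxodromic pairs, as every such pair has exactly one member in the disc.  A
  repeated root is a common root of f and f', which makes the resultant vanish.
*)
theory Submission
  imports Defs "Subresultants.Subresultant"
begin

section \<open>Resultants in terms of roots\<close>

definition roots_resultant :: "complex poly \<Rightarrow> complex poly \<Rightarrow> complex" where
  "roots_resultant f g = lead_coeff f ^ degree g * (\<Prod>a\<in>#proots f. poly g a)"

lemma poly_eq_lead_coeff_prod_roots:
  "poly f x = lead_coeff f * (\<Prod>a\<in>#proots f. x - a)" for f :: "complex poly"
proof -
  have "poly f x = poly (Polynomial.smult (lead_coeff f) (\<Prod>a\<in>#proots f. [:-a, 1:])) x"
    by (simp only: complex_poly_decompose_multiset)
  then show ?thesis by (simp add: poly_prod_mset)
qed

lemma roots_resultant_eq_prod_differences: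
  "roots_resultant f g = lead_coeff f ^ degree g * lead_coeff g ^ degree f *
     (\<Prod>a\<in>#proots f. \<Prod>b\<in>#proots g. a - b)"
  unfolding roots_resultant_def poly_eq_lead_coeff_prod_roots[of g]
  by (simp add: prod_mset.distrib size_proots_complex)

lemma roots_resultant_swap:
  "roots_resultant f g = (-1) ^ (degree f * degree g) * roots_resultant g f"
proof -
  have "(\<Prod>a\<in>#proots f. \<Prod>b\<in>#proots g. a - b) =
      (\<Prod>b\<in>#proots g. \<Prod>a\<in>#proots f. (-1) * (b - a))"
    by (subst prod_mset.swap) simp
  also have "\<dots> = (-1) ^ (degree f * degree g) * (\<Prod>b\<in>#proots g. \<Prod>a\<in>#proots f. b - a)"
    by (simp only: prod_mset.distrib prod_mset_constant size_proots_complex power_mult)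
  finally show ?thesis unfolding roots_resultant_eq_prod_differences by (simp add: ac_simps)
qed

lemma roots_resultant_mod_step:
  fixes f g :: "complex poly"
  assumes "degree g \<le> degree f" and "0 < degree g"
  shows "roots_resultant f g = (-1) ^ (degree f * degree g) *
    lead_coeff g ^ (degree f - degree (f mod g)) * roots_resultant g (f mod g)"
proof -
  have g0: "g \<noteq> 0" using assms by auto
  have "degree (f mod g) < degree g"
    using degree_mod_less[OF g0, of f] assms by (cases "f mod g = 0") auto
  then have lc: "lead_coeff g ^ degree f =
      lead_coeff g ^ (degree f - degree (f mod g)) * lead_coeff g ^ degree (f mod g)"
    using assms by (simp flip: power_add)
  have "(\<Prod>b\<in>#proots g. poly f b) = (\<Prod>b\<in>#proots g. poly (f mod g) b)"
    using g0 by (intro arg_cong[of _ _ prod_mset] image_mset_cong) (simp add: poly_mod)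
  then show ?thesis
    unfolding roots_resultant_swap[of f g] unfolding roots_resultant_def lc
    by (simp add: ac_simps)
qed

lemma resultant_mod_step:
  fixes f g :: "'a :: field poly"
  assumes le: "degree g \<le> degree f" and g: "0 < degree g"
  shows "resultant f g = (-1) ^ (degree f * degree g) *
    lead_coeff g ^ (degree f - degree (f mod g)) * resultant g (f mod g)"
proof -
  \<comment> \<open>Brown and Traub's subresultant relations for one division step\<close>
  define h where "h = f mod g"
  have g0: "g \<noteq> 0" using g by auto
  have fgh: "f + (- (f div g)) * g = h"
    by (simp add: h_def minus_div_mult_eq_mod [symmetric])
  have dh: "degree h < degree g"
    using degree_mod_less[OF g0, of f] g by (cases "h = 0") (auto simp: h_def)
  then have choice: "degree h < degree g \<or> h = 0 \<and> f \<noteq> 0 \<and> g \<noteq> 0" by simp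
  show ?thesis
  proof (cases "degree h = 0")
    case True
    then obtain c where hc: "h = [:c:]" by (metis degree_eq_zeroE)
    from BT_lemma_1_13[OF fgh le choice] True
    have "subresultant 0 f g = Polynomial.smult ((-1) ^ (degree f * degree g) *
       lead_coeff g ^ degree f * c ^ (degree g - 1)) h" using g by (simp add: hc)
    then have "resultant f g =
        (-1) ^ (degree f * degree g) * lead_coeff g ^ degree f * (c ^ (degree g - 1) * c)"
      by (simp add: hc flip: coeff_subresultant_0_0_resultant)
    also have "c ^ (degree g - 1) * c = c ^ degree g" using g by (simp flip: power_Suc2)
    finally show ?thesis using True by (simp add: hc flip: h_def)
  next
    case False
    with BT_lemma_1_12[OF fgh le choice, of 0]
    have "subresultant 0 f g = Polynomial.smult ((-1) ^ (degree f * degree g) *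
       lead_coeff g ^ (degree f - degree h)) (subresultant 0 g h)" by simp
    then show ?thesis by (simp add: h_def flip: coeff_subresultant_0_0_resultant)
  qed
qed

theorem resultant_eq_roots_resultant:
  fixes f g :: "complex poly"
  shows "resultant f g = roots_resultant f g"
proof (induction "degree f + degree g" arbitrary: f g rule: less_induct)
  case less
  have step: "resultant p q = roots_resultant p q"
    if "degree q \<le> degree p" "0 < degree q" "degree p + degree q \<le> degree f + degree g" for p q
  proof -
    have "degree (p mod q) < degree q" using degree_mod_less[of q p] that by fastforce
    then have "resultant q (p mod q) = roots_resultant q (p mod q)"
      using that by (intro less) simp
    then show ?thesis using that by (simp add: resultant_mod_step roots_resultant_mod_step)
  qed
  consider "degree g = 0" | "degree f = 0" | "0 < degree g" "degree g \<le> degree f"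
    | "0 < degree f" "degree f < degree g" by linarith
  then show ?case
  proof cases
    case 1
    then obtain c where "g = [:c:]" by (metis degree_eq_zeroE)
    then show ?thesis by (simp add: roots_resultant_def size_proots_complex)
  next
    case 2
    then obtain c where "f = [:c:]" by (metis degree_eq_zeroE)
    then show ?thesis by (simp add: roots_resultant_def)
  next
    case 3
    then show ?thesis by (intro step) simp_all
  next
    case 4
    then have "resultant g f = roots_resultant g f" by (intro step) simp_all
    then show ?thesis by (simp add: resultant_swap[of f g] roots_resultant_swap[of f g])
  qed
qed

lemma resultant_pderiv_eq_0_iff:
  fixes f :: "complex poly"
  assumes "f \<noteq> 0"
  shows "resultant f (pderiv f) = 0 \<longleftrightarrow> \<not> rsquarefree f"
  using assms by (auto simp: resultant_eq_roots_resultant roots_resultant_def rsquarefree_roots)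

lemma proots_rsquarefree:
  fixes f :: "complex poly"
  assumes "rsquarefree f"
  shows "proots f = mset_set {z. poly f z = 0}"
proof (rule multiset_eqI)
  fix z
  have "f \<noteq> 0" using assms by (simp add: rsquarefree_def)
  then show "count (proots f) z = count (mset_set {z. poly f z = 0}) z"
    using assms by (cases "poly f z = 0")
      (simp_all add: poly_roots_finite count_mset_set' rsquarefree_root_order order_0I)
qed

lemma resultant_pderiv_rsquarefree:
  fixes f :: "complex poly"
  assumes sf: "rsquarefree f" and monic: "lead_coeff f = 1"
  defines "S \<equiv> {z. poly f z = 0}"
  shows "resultant f (pderiv f) = (\<Prod>a\<in>S. \<Prod>b\<in>S - {a}. a - b)"
proof -
  have fin: "finite S"
    using sf unfolding S_def rsquarefree_def by (simp add: poly_roots_finite)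
  have f: "f = (\<Prod>z\<in>S. [:-z, 1:])"
    using complex_poly_decompose_rsquarefree[OF sf] monic by (simp add: S_def)
  have "poly (pderiv f) a = (\<Prod>b\<in>S - {a}. a - b)" if "a \<in> S" for a
  proof -
    define Q where "Q = (\<Prod>b\<in>S - {a}. [:-b, 1:])"
    have "f = [:-a, 1:] * Q" unfolding f Q_def using fin that by (rule prod.remove)
    then have "pderiv f = [:-a, 1:] * pderiv Q + Q * pderiv [:-a, 1:]"
      by (simp only: pderiv_mult)
    moreover have "pderiv [:-a, 1:] = 1" by (simp add: pderiv_pCons)
    ultimately have "poly (pderiv f) a = poly Q a" by simp
    then show ?thesis by (simp add: Q_def poly_prod)
  qed
  moreover have "resultant f (pderiv f) = (\<Prod>a\<in>S. poly (pderiv f) a)"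
    using sf monic by (simp add: resultant_eq_roots_resultant roots_resultant_def
        proots_rsquarefree prod_unfold_prod_mset S_def)
  ultimately show ?thesis by simp
qed

section \<open>Sets closed under inversion in the unit circle\<close>

definition circle_inversion_closed :: "complex set \<Rightarrow> bool" where
  "circle_inversion_closed S \<longleftrightarrow> 0 \<notin> S \<and> (\<forall>z\<in>S. inverse (cnj z) \<in> S)"

lemma inverse_cnj_eq_self_iff:
  fixes z :: complex
  assumes "z \<noteq> 0"
  shows "inverse (cnj z) = z \<longleftrightarrow> cmod z = 1"
proof -
  have "inverse (cnj z) = z \<longleftrightarrow> z * cnj z = 1"
    using assms by (auto simp: inverse_eq_divide divide_eq_eq)
  also have "\<dots> \<longleftrightarrow> cmod z ^ 2 = 1"
    by (metis complex_norm_square of_real_eq_1_iff)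
  also have "\<dots> \<longleftrightarrow> cmod z = 1"
    by (simp add: abs_square_eq_1)
  finally show ?thesis .
qed

lemma bij_betw_inverse_cnj_inside_outside:
  assumes "circle_inversion_closed S"
  shows "bij_betw (\<lambda>z. inverse (cnj z)) {z\<in>S. cmod z < 1} {z\<in>S. cmod z > 1}"
proof (rule bij_betw_byWitness[where f' = "\<lambda>z. inverse (cnj z)"])
  have S: "0 \<notin> S" "\<And>z. z \<in> S \<Longrightarrow> inverse (cnj z) \<in> S"
    using assms by (auto simp: circle_inversion_closed_def)
  show "(\<lambda>z. inverse (cnj z)) ` {z\<in>S. cmod z < 1} \<subseteq> {z\<in>S. cmod z > 1}"
  proof (rule image_subsetI)
    fix z assume "z \<in> {z\<in>S. cmod z < 1}"
    then have z: "z \<in> S" "cmod z < 1" by auto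
    then have "0 < cmod z" using S(1) by (metis zero_less_norm_iff)
    then show "inverse (cnj z) \<in> {z\<in>S. cmod z > 1}"
      using z S(2) by (simp add: norm_inverse one_less_inverse)
  qed
  show "(\<lambda>z. inverse (cnj z)) ` {z\<in>S. cmod z > 1} \<subseteq> {z\<in>S. cmod z < 1}"
    using S(2) by (auto simp: norm_inverse inverse_less_1_iff)
qed simp_all

lemma card_modulus_ne_1:
  assumes "finite S" and "circle_inversion_closed S"
  shows "card {z\<in>S. cmod z \<noteq> 1} = 2 * card {z\<in>S. cmod z < 1}"
proof -
  have "{z\<in>S. cmod z \<noteq> 1} = {z\<in>S. cmod z < 1} \<union> {z\<in>S. cmod z > 1}" by auto
  moreover have "card {z\<in>S. cmod z > 1} = card {z\<in>S. cmod z < 1}"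
    using bij_betw_same_card[OF bij_betw_inverse_cnj_inside_outside[OF assms(2)]] by simp
  ultimately show ?thesis
    using assms(1) by (simp add: card_Un_disjoint disjoint_iff)
qed

lemma prod_conj_involution_nonneg:
  fixes t :: "'a \<Rightarrow> complex"
  assumes "finite D"
    and "\<forall>p\<in>D. \<tau> p \<in> D \<and> \<tau> p \<noteq> p \<and> \<tau> (\<tau> p) = p \<and> t (\<tau> p) = cnj (t p)"
  shows "\<exists>c\<ge>0. prod t D = of_real c"
  using assms
proof (induction "card D" arbitrary: D rule: less_induct)
  case less
  show ?case
  proof (cases "D = {}")
    case True
    then show ?thesis by (intro exI[of _ 1]) simp
  next
    case False
    then obtain p where p: "p \<in> D" by blast
    define D' where "D' = D - {p, \<tau> p}"
    have D: "D = insert p (insert (\<tau> p) D')" "p \<notin> insert (\<tau> p) D'" "\<tau> p \<notin> D'" "finite D'"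
      using p less.prems unfolding D'_def by auto
    have "\<tau> q \<in> D'" if "q \<in> D'" for q
    proof -
      have q: "q \<in> D" "q \<noteq> p" "q \<noteq> \<tau> p" using that unfolding D'_def by auto
      then have "\<tau> q \<noteq> p" "\<tau> q \<noteq> \<tau> p" using less.prems p by metis+
      then show ?thesis using q less.prems unfolding D'_def by simp
    qed
    then have "\<forall>q\<in>D'. \<tau> q \<in> D' \<and> \<tau> q \<noteq> q \<and> \<tau> (\<tau> q) = q \<and> t (\<tau> q) = cnj (t q)"
      using less.prems unfolding D'_def by blast
    moreover have "card D' < card D"
      using D by simp
    ultimately obtain c where c: "c \<ge> 0" "prod t D' = of_real c"
      using less.hyps D(4) by blast
    have "prod t D = t p * cnj (t p) * prod t D'"
      using D less.prems p by (simp add: mult.assoc)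
    also have "\<dots> = of_real (cmod (t p) ^ 2 * c)"
      by (simp only: of_real_mult complex_norm_square c(2))
    finally show ?thesis using c(1) by (intro exI[of _ "cmod (t p) ^ 2 * c"]) simp
  qed
qed

lemma sgn_prod_real:
  fixes g :: "'a \<Rightarrow> real"
  assumes "finite U" and "\<forall>x\<in>U. g x \<noteq> 0"
  shows "sgn (\<Prod>x\<in>U. g x) = (-1) ^ card {x\<in>U. g x < 0}"
  using assms
proof (induction U rule: finite_induct)
  case (insert x U)
  have "finite {y\<in>U. g y < 0}" using insert.hyps by simp
  moreover have "{y\<in>insert x U. g y < 0} =
      (if g x < 0 then insert x {y\<in>U. g y < 0} else {y\<in>U. g y < 0})"
    by auto
  ultimately show ?case
    using insert by (cases "g x < 0") (simp_all add: sgn_mult)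
qed simp

lemma prod_differences_eq_prod_ratios:
  fixes S :: "complex set"
  assumes "finite S" and "0 \<notin> S"
  shows "(\<Prod>a\<in>S. \<Prod>b\<in>S - {a}. a - b) =
    (\<Prod>z\<in>S. z) ^ (card S - 1) * (\<Prod>(a, b)\<in>Sigma S (\<lambda>a. S - {a}). 1 - b / a)"
proof -
  have "(\<Prod>a\<in>S. \<Prod>b\<in>S - {a}. a - b) = (\<Prod>a\<in>S. \<Prod>b\<in>S - {a}. a * (1 - b / a))"
    using assms(2) by (intro prod.cong refl) (auto simp: field_simps)
  also have "\<dots> = (\<Prod>a\<in>S. a ^ (card S - 1) * (\<Prod>b\<in>S - {a}. 1 - b / a))"
    using assms(1) by (simp add: prod.distrib card_Diff_singleton)
  also have "\<dots> = (\<Prod>z\<in>S. z) ^ (card S - 1) * (\<Prod>a\<in>S. \<Prod>b\<in>S - {a}. 1 - b / a)"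
    by (simp add: prod.distrib prod_power_distrib)
  also have "(\<Prod>a\<in>S. \<Prod>b\<in>S - {a}. 1 - b / a) =
      (\<Prod>(a, b)\<in>Sigma S (\<lambda>a. S - {a}). 1 - b / a)"
    using assms(1) by (simp add: prod.Sigma)
  finally show ?thesis .
qed

lemma sgn_prod_one_minus_inverse_norm_square:
  fixes S :: "complex set"
  assumes "finite S" and "0 \<notin> S"
  shows "sgn (\<Prod>z\<in>{z\<in>S. cmod z \<noteq> 1}. 1 - 1 / cmod z ^ 2) =
    (-1) ^ card {z\<in>S. cmod z < 1}"
proof -
  have "(1 - 1 / cmod z ^ 2 < 0 \<longleftrightarrow> cmod z < 1) \<and> (1 - 1 / cmod z ^ 2 = 0 \<longleftrightarrow> cmod z = 1)"
    if "z \<in> S" for z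
  proof -
    have "0 < cmod z" using assms(2) that by (metis zero_less_norm_iff)
    then have "(1 - 1 / cmod z ^ 2 < 0 \<longleftrightarrow> cmod z ^ 2 < 1) \<and>
        (1 - 1 / cmod z ^ 2 = 0 \<longleftrightarrow> cmod z ^ 2 = 1)"
      by (simp add: field_simps)
    then show ?thesis by (simp add: abs_square_less_1 abs_square_eq_1)
  qed
  then have "{z\<in>{z\<in>S. cmod z \<noteq> 1}. 1 - 1 / cmod z ^ 2 < 0} = {z\<in>S. cmod z < 1}"
    and "\<forall>z\<in>{z\<in>S. cmod z \<noteq> 1}. 1 - 1 / cmod z ^ 2 \<noteq> 0"
    by auto
  then show ?thesis using assms(1) by (simp add: sgn_prod_real)
qed

lemma prod_conj_involution:
  fixes t :: "'a \<Rightarrow> complex"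
  assumes "finite D"
    and "\<forall>p\<in>D. \<tau> p \<in> D \<and> \<tau> (\<tau> p) = p \<and> t (\<tau> p) = cnj (t p) \<and> t p \<noteq> 0"
  shows "\<exists>c>0. prod t D = prod t {p\<in>D. \<tau> p = p} * of_real c"
proof -
  have "\<tau> p \<in> {p\<in>D. \<tau> p \<noteq> p} \<and> \<tau> (\<tau> p) = p \<and> t (\<tau> p) = cnj (t p)"
    if "p \<in> D" and "\<tau> p \<noteq> p" for p
    using assms(2) that by fastforce
  then have "\<exists>c\<ge>0. prod t {p\<in>D. \<tau> p \<noteq> p} = of_real c"
    using assms(1) by (intro prod_conj_involution_nonneg[where \<tau> = \<tau>]) auto
  then obtain c where c: "c \<ge> 0" "prod t {p\<in>D. \<tau> p \<noteq> p} = of_real c" by blast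
  have "prod t D = prod t {p\<in>D. \<tau> p = p} * prod t {p\<in>D. \<tau> p \<noteq> p}"
    using prod.Int_Diff[OF assms(1), of t "{p. \<tau> p = p}"]
    by (simp add: Int_def set_diff_eq conj_commute)
  moreover have "prod t D \<noteq> 0"
    using assms by simp
  ultimately show ?thesis
    using c by (intro exI[of _ c]) auto
qed

lemma prod_off_diagonal_ratios_sign:
  assumes "finite S" and "circle_inversion_closed S"
  shows "\<exists>\<rho>. (\<Prod>(a, b)\<in>Sigma S (\<lambda>a. S - {a}). 1 - b / a) = of_real \<rho> \<and>
    sgn \<rho> = (-1) ^ card {z\<in>S. cmod z < 1}"
proof -
  define \<sigma> where "\<sigma> z = inverse (cnj z)" for z :: complex
  define D where "D = Sigma S (\<lambda>a. S - {a})"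
  define t where "t = (\<lambda>(a, b). 1 - b / a :: complex)"
  define \<tau> where "\<tau> = (\<lambda>(a, b). (\<sigma> b, \<sigma> a))"
  define U where "U = {z\<in>S. cmod z \<noteq> 1}"
  have S: "0 \<notin> S" "\<And>z. z \<in> S \<Longrightarrow> \<sigma> z \<in> S"
    using assms(2) by (auto simp: circle_inversion_closed_def \<sigma>_def)
  have \<sigma>\<sigma>: "\<sigma> (\<sigma> z) = z" for z
    by (simp add: \<sigma>_def)
  have \<sigma>_fixed: "\<sigma> z = z \<longleftrightarrow> cmod z = 1" if "z \<in> S" for z
    using S(1) that unfolding \<sigma>_def by (metis inverse_cnj_eq_self_iff)
  have "t (\<tau> (a, b)) = cnj (t (a, b))" for a b
    by (simp add: t_def \<tau>_def \<sigma>_def divide_inverse mult.commute)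
  then have "\<forall>p\<in>D. \<tau> p \<in> D \<and> \<tau> (\<tau> p) = p \<and> t (\<tau> p) = cnj (t p) \<and> t p \<noteq> 0"
    using S by (auto simp: D_def \<tau>_def t_def \<sigma>\<sigma>) (metis \<sigma>\<sigma>)
  moreover have "finite D"
    using assms(1) by (simp add: D_def)
  ultimately obtain c where c: "c > 0" "prod t D = prod t {p\<in>D. \<tau> p = p} * of_real c"
    using prod_conj_involution by blast
  have fixed: "{p\<in>D. \<tau> p = p} = (\<lambda>a. (a, \<sigma> a)) ` U"
  proof (intro equalityI subsetI)
    fix p assume p: "p \<in> {p\<in>D. \<tau> p = p}"
    obtain a b where ab: "p = (a, b)" by (cases p)
    with p have "a \<in> S" "a \<noteq> b" "\<sigma> a = b" by (auto simp: D_def \<tau>_def)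
    then show "p \<in> (\<lambda>a. (a, \<sigma> a)) ` U"
      using \<sigma>_fixed[of a] unfolding ab U_def by (intro image_eqI[of _ _ a]) auto
  next
    fix p assume "p \<in> (\<lambda>a. (a, \<sigma> a)) ` U"
    then show "p \<in> {p\<in>D. \<tau> p = p}"
      using S \<sigma>_fixed by (auto simp: U_def D_def \<tau>_def \<sigma>\<sigma>)
  qed
  have "prod t {p\<in>D. \<tau> p = p} = (\<Prod>a\<in>U. t (a, \<sigma> a))"
    unfolding fixed by (subst prod.reindex) (auto simp: inj_on_def)
  also have "\<dots> = (\<Prod>z\<in>U. of_real (1 - 1 / cmod z ^ 2))"
  proof (rule prod.cong[OF refl])
    fix a
    have "a * cnj a = of_real (cmod a) ^ 2"
      by (metis complex_norm_square of_real_power)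
    then show "t (a, \<sigma> a) = of_real (1 - 1 / cmod a ^ 2)"
      by (simp add: t_def \<sigma>_def divide_inverse mult.commute flip: inverse_mult_distrib)
  qed
  finally have "prod t D = of_real ((\<Prod>z\<in>U. 1 - 1 / cmod z ^ 2) * c)"
    using c(2) by simp
  moreover have "sgn ((\<Prod>z\<in>U. 1 - 1 / cmod z ^ 2) * c) = (-1) ^ card {z\<in>S. cmod z < 1}"
    using c(1) sgn_prod_one_minus_inverse_norm_square[OF assms(1) S(1)]
    by (simp add: sgn_mult U_def)
  ultimately show ?thesis
    unfolding D_def t_def by blast
qed

section \<open>Loxodromic pairs of eigenvalues\<close>

lemma size_filter_loxodromic_pairs:
  assumes "\<forall>j<k. r j > 0 \<and> r j \<noteq> 1" and "\<forall>z\<in>#N. cmod z = 1"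
  shows "size (filter_mset (\<lambda>z. cmod z \<noteq> 1)
    ((\<Sum>j<k. {#complex_of_real (r j) * cis (\<theta> j), complex_of_real (inverse (r j)) * cis (\<theta> j)#})
      + N)) = 2 * k"
proof -
  have "filter_mset (\<lambda>z. cmod z \<noteq> 1) N = {#}"
    using assms(2) by (simp add: filter_mset_eq_conv)
  moreover have "size (filter_mset (\<lambda>z. cmod z \<noteq> 1) (\<Sum>j<k.
      {#complex_of_real (r j) * cis (\<theta> j), complex_of_real (inverse (r j)) * cis (\<theta> j)#})) = 2 * k"
    using assms(1) by (induction k) (auto simp: norm_mult norm_inverse)
  ultimately show ?thesis by simp
qed

lemma sum_pairs_eq_image_mset:
  fixes k :: nat
  shows "(\<Sum>j<k. {#u j, v j#}) =
    image_mset u (mset_set {..<k}) + image_mset v (mset_set {..<k})"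
  by (induction k) (simp_all add: lessThan_Suc)

lemma inverse_cnj_polar: "inverse (cnj z) = complex_of_real (inverse (cmod z)) * cis (Arg z)"
  by (subst (1) rcis_cmod_Arg[symmetric]) (simp add: rcis_def cis_cnj)

lemma exists_loxodromic_pairs:
  assumes "finite S" and "circle_inversion_closed S"
  defines "k \<equiv> card {z\<in>S. cmod z < 1}"
  shows "\<exists>(r :: nat \<Rightarrow> real) (\<theta> :: nat \<Rightarrow> real) N. (\<forall>j<k. r j > 0 \<and> r j \<noteq> 1) \<and>
    (\<forall>z\<in>#N. cmod z = 1) \<and>
    mset_set S = (\<Sum>j<k. {#complex_of_real (r j) * cis (\<theta> j),
      complex_of_real (inverse (r j)) * cis (\<theta> j)#}) + N"
proof -
  define L where "L = {z\<in>S. cmod z < 1}"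
  define G where "G = {z\<in>S. cmod z > 1}"
  define U where "U = {z\<in>S. cmod z = 1}"
  have fin: "finite L" "finite G" "finite U"
    using assms(1) by (simp_all add: L_def G_def U_def)
  obtain h where h: "bij_betw h {..<k} L"
    using ex_bij_betw_nat_finite[OF fin(1)] by (auto simp: k_def L_def atLeast0LessThan)
  have "0 \<notin> S" using assms(2) by (simp add: circle_inversion_closed_def)
  then have r: "\<forall>j<k. cmod (h j) > 0 \<and> cmod (h j) \<noteq> 1"
    using bij_betw_apply[OF h] by (fastforce simp: L_def)
  have "(\<Sum>j<k. {#complex_of_real (cmod (h j)) * cis (Arg (h j)),
      complex_of_real (inverse (cmod (h j))) * cis (Arg (h j))#}) =
    (\<Sum>j<k. {#h j, inverse (cnj (h j))#})"
    by (simp add: inverse_cnj_polar flip: rcis_def) (simp add: rcis_cmod_Arg)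
  also have "\<dots> = image_mset h (mset_set {..<k}) +
      image_mset (\<lambda>z. inverse (cnj z)) (image_mset h (mset_set {..<k}))"
    by (simp add: sum_pairs_eq_image_mset image_mset.compositionality o_def)
  also have "image_mset h (mset_set {..<k}) = mset_set L"
    using h by (simp add: bij_betw_def image_mset_mset_set)
  also have "image_mset (\<lambda>z. inverse (cnj z)) (mset_set L) = mset_set G"
    using bij_betw_inverse_cnj_inside_outside[OF assms(2)]
    by (simp add: L_def G_def bij_betw_def image_mset_mset_set)
  also have "mset_set L + mset_set G + mset_set U = mset_set S"
  proof -
    have "L \<inter> G = {}" "(L \<union> G) \<inter> U = {}" "L \<union> G \<union> U = S"
      by (auto simp: L_def G_def U_def)
    then show ?thesis using fin by (simp flip: mset_set_Union)
  qed
  finally show ?thesis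
    using r fin(3)
    by (intro exI[of _ "\<lambda>j. cmod (h j)"] exI[of _ "\<lambda>j. Arg (h j)"] exI[of _ "mset_set U"])
      (auto simp: U_def)
qed

section \<open>Characteristic polynomials\<close>

lemma c_reciprocal_roots:
  assumes "c_reciprocal f"
  shows "finite {z. poly f z = 0}" and "circle_inversion_closed {z. poly f z = 0}"
proof -
  have "z \<noteq> 0 \<and> poly f (inverse (cnj z)) = 0" if "poly f z = 0" for z
  proof -
    have "f \<noteq> 0" "z \<noteq> 0" "order (inverse (cnj z)) f = order z f"
      using assms that by (auto simp: c_reciprocal_def)
    moreover have "order z f \<noteq> 0"
      using that \<open>f \<noteq> 0\<close> by (simp add: order_root)
    ultimately show ?thesis by (simp add: order_root)
  qed
  then show "circle_inversion_closed {z. poly f z = 0}"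
    by (auto simp: circle_inversion_closed_def)
  show "finite {z. poly f z = 0}"
    using assms by (simp add: c_reciprocal_def poly_roots_finite)
qed

lemma prod_roots_char_poly:
  fixes A :: "complex mat"
  assumes A: "A \<in> carrier_mat n n"
  shows "(\<Prod>z\<in>#proots (char_poly A). z) = det A"
proof -
  have monic: "lead_coeff (char_poly A) = 1" and deg: "degree (char_poly A) = n"
    using degree_monic_char_poly[OF A] by simp_all
  have "- char_matrix A 0 = (-1) \<cdot>\<^sub>m A"
    using A by (intro eq_matI) (auto simp: char_matrix_def)
  then have "poly (char_poly A) 0 = (-1) ^ n * det A"
    using A by (simp add: char_poly_matrix[OF A])
  moreover have "poly (char_poly A) 0 = (\<Prod>a\<in>#proots (char_poly A). (-1) * a)"
    by (simp add: poly_eq_lead_coeff_prod_roots[of _ 0] monic)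
  moreover have "(\<Prod>a\<in>#proots (char_poly A). (-1) * a) =
      (-1) ^ n * (\<Prod>z\<in>#proots (char_poly A). z)"
    by (simp only: prod_mset.distrib prod_mset_constant size_proots_complex deg)
  ultimately show ?thesis by simp
qed

lemma regular_k_loxodromic_iff:
  assumes "c_reciprocal (char_poly A)" and "regular_mat A"
  shows "k_loxodromic k A \<longleftrightarrow> k = card {z. poly (char_poly A) z = 0 \<and> cmod z < 1}"
proof -
  define S where "S = {z. poly (char_poly A) z = 0}"
  note fin = c_reciprocal_roots(1)[OF assms(1), folded S_def]
  note cl = c_reciprocal_roots(2)[OF assms(1), folded S_def]
  have roots: "proots (char_poly A) = mset_set S"
    using assms(2) by (simp add: S_def regular_mat_def proots_rsquarefree)
  have l: "{z. poly (char_poly A) z = 0 \<and> cmod z < 1} = {z\<in>S. cmod z < 1}"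
    by (simp add: S_def)
  show ?thesis
  proof
    assume "k_loxodromic k A"
    then obtain r \<theta> N where "\<forall>j<k. r j > 0 \<and> r j \<noteq> 1" "\<forall>z\<in>#N. cmod z = 1"
      "proots (char_poly A) = (\<Sum>j<k. {#complex_of_real (r j) * cis (\<theta> j),
         complex_of_real (inverse (r j)) * cis (\<theta> j)#}) + N"
      unfolding k_loxodromic_def by blast
    then have "size (filter_mset (\<lambda>z. cmod z \<noteq> 1) (proots (char_poly A))) = 2 * k"
      by (simp only: size_filter_loxodromic_pairs)
    then show "k = card {z. poly (char_poly A) z = 0 \<and> cmod z < 1}"
      using card_modulus_ne_1[OF fin cl] fin by (simp add: roots l)
  next
    assume "k = card {z. poly (char_poly A) z = 0 \<and> cmod z < 1}"
    then show "k_loxodromic k A"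
      using exists_loxodromic_pairs[OF fin cl] unfolding k_loxodromic_def roots l by blast
  qed
qed

lemma regular_resultant_pderiv_sign:
  assumes "A \<in> SL n" and "c_reciprocal (char_poly A)" and "regular_mat A"
  shows "\<exists>\<rho>. resultant (char_poly A) (pderiv (char_poly A)) = of_real \<rho> \<and>
    sgn \<rho> = (-1) ^ card {z. poly (char_poly A) z = 0 \<and> cmod z < 1}"
proof -
  define S where "S = {z. poly (char_poly A) z = 0}"
  have A: "A \<in> carrier_mat n n" "det A = 1"
    using assms(1) by (simp_all add: SL_def)
  note fin = c_reciprocal_roots(1)[OF assms(2), folded S_def]
  note cl = c_reciprocal_roots(2)[OF assms(2), folded S_def]
  have sf: "rsquarefree (char_poly A)"
    using assms(3) by (simp add: regular_mat_def)
  have "(\<Prod>z\<in>S. z) = 1"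
    using prod_roots_char_poly[OF A(1)] A(2)
    by (simp add: S_def proots_rsquarefree[OF sf] prod_unfold_prod_mset)
  then have "resultant (char_poly A) (pderiv (char_poly A)) =
      (\<Prod>(a, b)\<in>Sigma S (\<lambda>a. S - {a}). 1 - b / a)"
    using resultant_pderiv_rsquarefree[OF sf] degree_monic_char_poly[OF A(1)]
      prod_differences_eq_prod_ratios[OF fin] cl
    by (simp add: S_def circle_inversion_closed_def)
  moreover have "{z. poly (char_poly A) z = 0 \<and> cmod z < 1} = {z\<in>S. cmod z < 1}"
    by (simp add: S_def)
  ultimately show ?thesis
    using prod_off_diagonal_ratios_sign[OF fin cl] by simp
qed

theorem theorem1p5:
  fixes A :: "complex mat" and n :: nat
  assumes "A \<in> SL n"
    and "c_reciprocal (char_poly A)"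
  defines "R \<equiv> resultant (char_poly A) (pderiv (char_poly A))"
  shows "((\<exists>m::nat. regular_mat A \<and> k_loxodromic (2*m) A) \<longleftrightarrow> (R \<in> \<real> \<and> Re R > 0))
       \<and> ((\<exists>m::nat. regular_mat A \<and> k_loxodromic (2*m+1) A) \<longleftrightarrow> (R \<in> \<real> \<and> Re R < 0))
       \<and> (\<not> regular_mat A \<longleftrightarrow> R = 0)"
proof -
  let ?l = "card {z. poly (char_poly A) z = 0 \<and> cmod z < 1}"
  have singular: "\<not> regular_mat A \<longleftrightarrow> R = 0"
    using assms(2) resultant_pderiv_eq_0_iff
    unfolding R_def regular_mat_def c_reciprocal_def by blast
  show ?thesis
  proof (cases "regular_mat A")
    case True
    then obtain \<rho> where R: "R = of_real \<rho>" and sgn: "sgn \<rho> = (-1) ^ ?l"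
      using regular_resultant_pderiv_sign assms unfolding R_def by blast
    have "sgn \<rho> = (if even ?l then 1 else -1)"
      using sgn by simp
    then have "0 < \<rho> \<longleftrightarrow> even ?l" and "\<rho> < 0 \<longleftrightarrow> odd ?l"
      by (auto simp: sgn_real_def split: if_splits)
    moreover have "k_loxodromic k A \<longleftrightarrow> k = ?l" for k
      using regular_k_loxodromic_iff assms(2) True by blast
    moreover have "(\<exists>m. 2 * m = l) \<longleftrightarrow> even l" and "(\<exists>m. 2 * m + 1 = l) \<longleftrightarrow> odd l"
      for l :: nat
      by presburger+
    ultimately show ?thesis
      using True R singular by simp
  next
    case False
    then show ?thesis using singular by simp
  qed
qed

end
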